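(* Let $\mathscr{S}\subset\mathbb{T}^n$ be tropically convex. Then $\mathscr{S}$ is a projected tropical Metzler spectrahedron if and only if its homogenization $\mathscr{S}^h\subset\mathbb{T}^{n+1}$ is a projected tropical Metzler spectrahedron.
   Context: $\mathbb{T}=\mathbb{R}\cup\{-\infty\}$, $-\infty+a=-\infty$. Tropically convex: $\max(\lambda+x,\mu+y)\in X$ for $x,y\in X$, $\lambda,\mu\in\mathbb{T}$, $\max(\lambda,\mu)=0$. Homogenization: $\mathscr{S}^h=\{(x_0,x_0+x)\in\mathbb{T}^{n+1}: x_0\in\mathbb{T},\ x\in\mathscr{S}\}$, where $x_0+x$ has entries $x_0+x_k$. Signed tropical numbers $\mathbb{S}=(\{\pm1\}\times\mathbb{R})\cup\{(0,-\infty)\}$, $(1,a)$ positive, $(-1,a)$ negative, modulus $|(s,a)|=a$; a matrix over $\mathbb{S}$ is tropical Metzler if off-diagonal entries are negative or $(0,-\infty)$. For symmetric tropical Metzler $Q^{(0)},\dots,Q^{(N)}$, with $x_0:=0$, $x\in\mathbb{T}^N$: $Q^{+}_{ii}(x)=\max\{|Q^{(k)}_{ii}|+x_k: Q^{(k)}_{ii}\text{ positive}\}$, $Q^-_{ii}$ likewise with negative entries ($\max\emptyset=-\infty$), $Q_{ij}(x)=\max_k(|Q^{(k)}_{ij}|+x_k)$ ($i\ne j$); the tropical Metzler spectrahedron $\mathcal{S}(Q^{(0)}|Q^{(1)},\dots,Q^{(N)})=\{x\in\mathbb{T}^N: Q^+_{ii}(x)\ge Q^-_{ii}(x)\ \forall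 i,\ Q^+_{ii}(x)+Q^+_{jj}(x)\ge2Q_{ij}(x)\ \forall i\ne j\}$. A subset of $\mathbb{T}^d$ is a projected tropical Metzler spectrahedron if it is the image of a tropical Metzler spectrahedron in $\mathbb{T}^{d+d'}$ ($d'\ge0$) under projection onto the first $d$ coordinates. *)

theory Defs
  imports "HOL-Library.Extended_Real"
begin

text \<open>Tropical numbers T = R \<union> {-\<infinity>} are modelled as extended reals different from +\<infinity>.
  Points of T^n are lists of length n of such values.\<close>

definition trop :: "ereal \<Rightarrow> bool" where
  "trop a \<longleftrightarrow> a \<noteq> \<infinity>"

definition tspace :: "nat \<Rightarrow> ereal list set" where
  "tspace n = {x. length x = n \<and> (\<forall>a\<in>set x. trop a)}"

definition trop_convex :: "ereal list set \<Rightarrow> bool" where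
  "trop_convex X \<longleftrightarrow> (\<forall>x\<in>X. \<forall>y\<in>X. \<forall>l u. trop l \<and> trop u \<and> max l u = 0 \<longrightarrow>
      map2 (\<lambda>a b. max (l + a) (u + b)) x y \<in> X)"

definition homog :: "ereal list set \<Rightarrow> ereal list set" where
  "homog X = {x0 # map (\<lambda>a. x0 + a) x | x0 x. trop x0 \<and> x \<in> X}"

text \<open>Signed tropical numbers: pairs (sign, modulus), either sign \<plusminus>1 with real modulus,
  or (0, -\<infinity>).\<close>
type_synonym strop = "int \<times> ereal"

definition valid_strop :: "strop \<Rightarrow> bool" where
  "valid_strop q \<longleftrightarrow> (fst q \<in> {1, -1} \<and> snd q \<noteq> \<infinity> \<and> snd q \<noteq> -\<infinity>) \<or> q = (0, -\<infinity>)"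

text \<open>A family Q^(0),...,Q^(N) of symmetric tropical Metzler m\<times>m matrices over S;
  Q k i j is entry (i,j) of Q^(k), with indices i, j < m.\<close>
definition metzler_family :: "nat \<Rightarrow> nat \<Rightarrow> (nat \<Rightarrow> nat \<Rightarrow> nat \<Rightarrow> strop) \<Rightarrow> bool" where
  "metzler_family m N Q \<longleftrightarrow> (\<forall>k\<le>N. \<forall>i<m. \<forall>j<m.
      valid_strop (Q k i j) \<and> Q k i j = Q k j i \<and> (i \<noteq> j \<longrightarrow> fst (Q k i j) \<le> 0))"

definition xext :: "ereal list \<Rightarrow> nat \<Rightarrow> ereal" where
  "xext x k = (if k = 0 then 0 else x ! (k - 1))"

definition Qplus :: "nat \<Rightarrow> (nat \<Rightarrow> nat \<Rightarrow> nat \<Rightarrow> strop) \<Rightarrow> ereal list \<Rightarrow> nat \<Rightarrow> ereal" where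
  "Qplus N Q x i = Sup {snd (Q k i i) + xext x k | k. k \<le> N \<and> fst (Q k i i) = 1}"

definition Qminus :: "nat \<Rightarrow> (nat \<Rightarrow> nat \<Rightarrow> nat \<Rightarrow> strop) \<Rightarrow> ereal list \<Rightarrow> nat \<Rightarrow> ereal" where
  "Qminus N Q x i = Sup {snd (Q k i i) + xext x k | k. k \<le> N \<and> fst (Q k i i) = -1}"

definition Qoff :: "nat \<Rightarrow> (nat \<Rightarrow> nat \<Rightarrow> nat \<Rightarrow> strop) \<Rightarrow> ereal list \<Rightarrow> nat \<Rightarrow> nat \<Rightarrow> ereal" where
  "Qoff N Q x i j = Sup {snd (Q k i j) + xext x k | k. k \<le> N}"

definition metzler_spec :: "nat \<Rightarrow> nat \<Rightarrow> (nat \<Rightarrow> nat \<Rightarrow> nat \<Rightarrow> strop) \<Rightarrow> ereal list set" where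
  "metzler_spec m N Q = {x \<in> tspace N.
      (\<forall>i<m. Qplus N Q x i \<ge> Qminus N Q x i) \<and>
      (\<forall>i<m. \<forall>j<m. i \<noteq> j \<longrightarrow> Qplus N Q x i + Qplus N Q x j \<ge> 2 * Qoff N Q x i j)}"

definition proj_metzler_spec :: "nat \<Rightarrow> ereal list set \<Rightarrow> bool" where
  "proj_metzler_spec d X \<longleftrightarrow> (\<exists>d' m Q. metzler_family m (d + d') Q \<and>
      X = take d ` metzler_spec m (d + d') Q)"

end

theory Submission
  imports Defs
begin

text \<open>
  All defining
  inequalities are tropically homogeneous, so adding a common real to every variable, the
  constant slot \<open>x\<^sub>0 = 0\<close> included, shifts both sides of each of them alike. Turning the
  constant slot of a description of \<open>S\<close> into a new first variable therefore describes the points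
  \<open>(x\<^sub>0, x\<^sub>0 + x)\<close> of \<open>S\<^sup>h\<close> with \<open>x\<^sub>0\<close> finite; extra \<open>2 \<times> 2\<close> blocks \<open>2 x\<^sub>c \<le> x\<^sub>0 + t\<^sub>c\<close> with
  fresh variables \<open>t\<^sub>c\<close> force the first \<open>n\<close> coordinates to be \<open>-\<infinity>\<close> when \<open>x\<^sub>0 = -\<infinity>\<close>, which
  is exactly the remaining point of \<open>S\<^sup>h\<close> when \<open>S \<noteq> {}\<close>. Conversely, moving the homogenizing
  coordinate of a description of \<open>S\<^sup>h\<close> behind all others and pinning it to \<open>0\<close> by two \<open>1 \<times> 1\<close>
  blocks describes \<open>S\<close>.
\<close>

type_synonym smat_family = "nat \<Rightarrow> nat \<Rightarrow> nat \<Rightarrow> strop"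

definition szero :: strop where
  "szero = (0, -\<infinity>)"

lemma szero_simps [simp]: "fst szero = 0" "snd szero = -\<infinity>" "valid_strop szero"
  by (simp_all add: valid_strop_def szero_def)

definition entry_max :: "nat \<Rightarrow> smat_family \<Rightarrow> ereal list \<Rightarrow> nat \<Rightarrow> nat \<Rightarrow> (int \<Rightarrow> bool) \<Rightarrow> ereal" where
  "entry_max N Q x i j P = Sup {snd (Q k i j) + xext x k | k. k \<le> N \<and> P (fst (Q k i j))}"

lemma Qplus_eq_entry_max: "Qplus N Q x i = entry_max N Q x i i (\<lambda>s. s = 1)"
  by (simp add: Qplus_def entry_max_def)

lemma Qminus_eq_entry_max: "Qminus N Q x i = entry_max N Q x i i (\<lambda>s. s = -1)"
  by (simp add: Qminus_def entry_max_def)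

lemma Qoff_eq_entry_max: "Qoff N Q x i j = entry_max N Q x i j (\<lambda>s. True)"
  by (simp add: Qoff_def entry_max_def)

lemmas entry_max_simps = Qplus_eq_entry_max Qminus_eq_entry_max Qoff_eq_entry_max

lemma ereal_minf_add: "y \<noteq> \<infinity> \<Longrightarrow> -\<infinity> + y = (-\<infinity> :: ereal)"
  by (cases y) auto

lemma ereal_add_not_PInf: "(a :: ereal) \<noteq> \<infinity> \<Longrightarrow> b \<noteq> \<infinity> \<Longrightarrow> a + b \<noteq> \<infinity>"
  by (cases a; cases b) auto

lemma ereal_add_left_le_iff: "ereal r + a \<le> ereal r + b \<longleftrightarrow> a \<le> b"
  by (cases a; cases b) auto

lemma ereal_double_add_le_iff:
  "2 * (ereal r + c) \<le> (ereal r + a) + (ereal r + b) \<longleftrightarrow> 2 * c \<le> a + b"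
  by (cases a; cases b; cases c) auto

lemma Sup_add_shift:
  fixes A B :: "ereal set"
  assumes "finite A" "c \<noteq> \<infinity>" "\<infinity> \<notin> A" "B - {-\<infinity>} \<subseteq> (+) c ` A" "(+) c ` A \<subseteq> B"
  shows "Sup B = c + Sup A"
proof (rule antisym)
  show "Sup B \<le> c + Sup A"
  proof (rule Sup_least)
    fix b assume "b \<in> B"
    then show "b \<le> c + Sup A"
      using assms(4) by (cases "b = -\<infinity>") (auto intro: add_left_mono Sup_upper)
  qed
  show "c + Sup A \<le> Sup B"
  proof (cases "A = {}")
    case True
    then show ?thesis using assms(2) by (cases c) (simp_all add: bot_ereal_def)
  next
    case False
    have "Sup A \<in> A" by (rule finite_Sup_in) (use assms(1) False in \<open>auto simp: sup_max max_def\<close>)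
    then show ?thesis using assms(5) by (auto intro: Sup_upper)
  qed
qed

lemma xext_not_PInf: "x \<in> tspace N \<Longrightarrow> k \<le> N \<Longrightarrow> xext x k \<noteq> \<infinity>"
  unfolding tspace_def xext_def trop_def by (auto dest!: bspec[where x = "x ! (k - 1)"])

lemma metzler_familyD:
  "metzler_family m N Q \<Longrightarrow> k \<le> N \<Longrightarrow> i < m \<Longrightarrow> j < m \<Longrightarrow>
    valid_strop (Q k i j) \<and> Q k i j = Q k j i \<and> (i \<noteq> j \<longrightarrow> fst (Q k i j) \<le> 0)"
  unfolding metzler_family_def by blast

lemma metzler_family_entry_not_PInf:
  assumes "metzler_family m N Q" "k \<le> N" "i < m" "j < m"
  shows "snd (Q k i j) \<noteq> \<infinity>"
proof -
  have "valid_strop (Q k i j)"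
    using metzler_familyD[OF assms] by blast
  then show ?thesis
    unfolding valid_strop_def by auto
qed

lemma entry_max_reindex:
  assumes c: "c \<noteq> \<infinity>"
    and fin: "\<forall>k\<le>N. snd (Q k i j) \<noteq> \<infinity> \<and> xext x k \<noteq> \<infinity>"
    and fin': "\<forall>k'\<le>N'. xext x' k' \<noteq> \<infinity>"
    and old: "\<forall>k\<le>N. \<exists>k'\<le>N'. Q' k' i' j' = Q k i j \<and> xext x' k' = c + xext x k"
    and new: "\<forall>k'\<le>N'. Q' k' i' j' = szero \<or>
                (\<exists>k\<le>N. Q' k' i' j' = Q k i j \<and> xext x' k' = c + xext x k)"
  shows "entry_max N' Q' x' i' j' P = c + entry_max N Q x i j P"
proof -
  define A where "A = {snd (Q k i j) + xext x k | k. k \<le> N \<and> P (fst (Q k i j))}"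
  define B where "B = {snd (Q' k' i' j') + xext x' k' | k'. k' \<le> N' \<and> P (fst (Q' k' i' j'))}"
  have "finite A"
    unfolding A_def by (rule finite_subset[of _ "(\<lambda>k. snd (Q k i j) + xext x k) ` {..N}"]) auto
  moreover have "\<infinity> \<notin> A"
    unfolding A_def using fin by (auto dest: ereal_add_not_PInf)
  moreover have "B - {-\<infinity>} \<subseteq> (+) c ` A"
  proof
    fix b assume "b \<in> B - {-\<infinity>}"
    then obtain k' where k': "k' \<le> N'" "P (fst (Q' k' i' j'))"
      "b = snd (Q' k' i' j') + xext x' k'" "b \<noteq> -\<infinity>"
      unfolding B_def by blast
    then obtain k where k: "k \<le> N" "Q' k' i' j' = Q k i j" "xext x' k' = c + xext x k"
      using new fin' by (fastforce simp: ereal_minf_add)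
    then have "snd (Q k i j) + xext x k \<in> A"
      unfolding A_def using k' by auto
    moreover have "b = c + (snd (Q k i j) + xext x k)"
      using k k' by (simp add: ac_simps)
    ultimately show "b \<in> (+) c ` A"
      by blast
  qed
  moreover have "(+) c ` A \<subseteq> B"
  proof
    fix b assume "b \<in> (+) c ` A"
    then obtain k where k: "k \<le> N" "P (fst (Q k i j))" "b = c + (snd (Q k i j) + xext x k)"
      unfolding A_def by blast
    then obtain k' where "k' \<le> N'" "Q' k' i' j' = Q k i j" "xext x' k' = c + xext x k"
      using old by blast
    then show "b \<in> B"
      unfolding B_def using k by (auto simp: ac_simps intro!: exI[of _ k'])
  qed
  ultimately have "Sup B = c + Sup A"
    using c Sup_add_shift by blast
  then show ?thesis
    unfolding entry_max_def A_def B_def .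
qed

lemma entry_max_minf:
  assumes "\<forall>k\<le>N. P (fst (Q k i j)) \<longrightarrow> snd (Q k i j) + xext x k = -\<infinity>"
  shows "entry_max N Q x i j P = -\<infinity>"
  unfolding entry_max_def using assms by (auto intro!: Sup_eqI)

lemma entry_max_single:
  assumes "k0 \<le> N" "P (fst (Q k0 i j))"
    and "\<forall>k\<le>N. k \<noteq> k0 \<longrightarrow> P (fst (Q k i j)) \<longrightarrow> snd (Q k i j) = -\<infinity>"
    and "x \<in> tspace N"
  shows "entry_max N Q x i j P = snd (Q k0 i j) + xext x k0"
  unfolding entry_max_def
proof (rule Sup_eqI)
  fix b assume "b \<in> {snd (Q k i j) + xext x k | k. k \<le> N \<and> P (fst (Q k i j))}"
  then obtain k where k: "k \<le> N" "P (fst (Q k i j))" "b = snd (Q k i j) + xext x k"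
    by blast
  then show "b \<le> snd (Q k0 i j) + xext x k0"
    using assms(3,4) xext_not_PInf by (cases "k = k0") (auto simp: ereal_minf_add)
qed (use assms(1,2) in blast)

lemma metzler_spec_shift:
  assumes "x \<in> tspace N" "x' \<in> tspace N'"
    and "\<And>i j P. i < m \<Longrightarrow> j < m \<Longrightarrow> entry_max N' Q' x' i j P = ereal r + entry_max N Q x i j P"
  shows "x' \<in> metzler_spec m N' Q' \<longleftrightarrow> x \<in> metzler_spec m N Q"
  using assms unfolding metzler_spec_def entry_max_simps
  \<comment> \<open>the simplifier normalises the numeral \<open>2 :: ereal\<close> to \<open>ereal 2\<close>\<close>
  by (simp add: ereal_add_left_le_iff ereal_double_add_le_iff[unfolded numeral_eq_ereal])

lemma replicate_minf_in_metzler_spec: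
  assumes "metzler_family m N Q" "\<forall>i<m. \<forall>j<m. snd (Q 0 i j) = -\<infinity>"
  shows "replicate N (-\<infinity>) \<in> metzler_spec m N Q"
proof -
  have "entry_max N Q (replicate N (-\<infinity>)) i j P = -\<infinity>" if "i < m" "j < m" for i j P
  proof (rule entry_max_minf, intro allI impI)
    fix k assume "k \<le> N"
    then show "snd (Q k i j) + xext (replicate N (-\<infinity>)) k = -\<infinity>"
      using assms that metzler_family_entry_not_PInf[OF assms(1) _ that]
      by (cases k) (auto simp: xext_def add.commute ereal_minf_add)
  qed
  then show ?thesis
    unfolding metzler_spec_def entry_max_simps by (simp add: tspace_def trop_def)
qed

subsection \<open>Operations on families of matrices\<close>

lemma all_less_add_iff: "(\<forall>i<m + m'. P i) \<longleftrightarrow> (\<forall>i<m. P i) \<and> (\<forall>a<m'. P (m + a))"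
  for m m' :: nat
proof
  assume H: "(\<forall>i<m. P i) \<and> (\<forall>a<m'. P (m + a))"
  show "\<forall>i<m + m'. P i"
  proof (intro allI impI)
    fix i assume "i < m + m'"
    then show "P i"
      using H by (cases "i < m") (auto dest: spec[of _ "i - m"])
  qed
qed auto

definition block_diag :: "nat \<Rightarrow> smat_family \<Rightarrow> smat_family \<Rightarrow> smat_family" where
  "block_diag m Q R k i j = (if i < m \<and> j < m then Q k i j
     else if m \<le> i \<and> m \<le> j then R k (i - m) (j - m) else szero)"

lemma metzler_family_block_diag:
  assumes Q: "metzler_family m N Q" and R: "metzler_family m' N R"
  shows "metzler_family (m + m') N (block_diag m Q R)"
  unfolding metzler_family_def
proof (intro allI impI)
  fix k i j assume k: "k \<le> N" and ij: "i < m + m'" "j < m + m'"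
  consider "i < m" "j < m" | "m \<le> i" "m \<le> j" | "block_diag m Q R k i j = szero" "block_diag m Q R k j i = szero"
    by (force simp: block_diag_def)
  then show "valid_strop (block_diag m Q R k i j) \<and> block_diag m Q R k i j = block_diag m Q R k j i \<and>
      (i \<noteq> j \<longrightarrow> fst (block_diag m Q R k i j) \<le> 0)"
  proof cases
    case 1
    then show ?thesis
      using metzler_familyD[OF Q k 1] by (auto simp: block_diag_def)
  next
    case 2
    then have "i - m < m'" "j - m < m'" "i \<noteq> j \<longleftrightarrow> i - m \<noteq> j - m"
      using ij by auto
    then show ?thesis
      using metzler_familyD[OF R k, of "i - m" "j - m"] 2 by (auto simp: block_diag_def)
  qed simp
qed

lemma metzler_spec_block_diag:
  "metzler_spec (m + m') N (block_diag m Q R) = metzler_spec m N Q \<inter> metzler_spec m' N R"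
proof -
  let ?F = "block_diag m Q R"
  have upper: "entry_max N ?F x i j P = entry_max N Q x i j P" if "i < m" "j < m" for x i j P
    using that by (simp add: entry_max_def block_diag_def)
  have lower: "entry_max N ?F x (m + a) (m + b) P = entry_max N R x a b P" for x a b P
    by (simp add: entry_max_def block_diag_def)
  have mixed: "entry_max N ?F x i (m + a) P = -\<infinity>" "entry_max N ?F x (m + a) i P = -\<infinity>"
    if "x \<in> tspace N" "i < m" for x i a P
    by (rule entry_max_minf; use that xext_not_PInf in \<open>auto simp: block_diag_def ereal_minf_add\<close>)+
  have diag: "(\<forall>i<m + m'. Qminus N ?F x i \<le> Qplus N ?F x i) \<longleftrightarrow>
      (\<forall>i<m. Qminus N Q x i \<le> Qplus N Q x i) \<and> (\<forall>a<m'. Qminus N R x a \<le> Qplus N R x a)" for x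
    by (simp only: all_less_add_iff) (simp add: entry_max_simps upper lower)
  have off: "(\<forall>i<m + m'. \<forall>j<m + m'. i \<noteq> j \<longrightarrow> 2 * Qoff N ?F x i j \<le> Qplus N ?F x i + Qplus N ?F x j) \<longleftrightarrow>
      (\<forall>i<m. \<forall>j<m. i \<noteq> j \<longrightarrow> 2 * Qoff N Q x i j \<le> Qplus N Q x i + Qplus N Q x j) \<and>
      (\<forall>a<m'. \<forall>b<m'. a \<noteq> b \<longrightarrow> 2 * Qoff N R x a b \<le> Qplus N R x a + Qplus N R x b)"
    if "x \<in> tspace N" for x
    by (simp only: all_less_add_iff) (simp add: entry_max_simps upper lower mixed[OF that])
  have "x \<in> metzler_spec (m + m') N ?F \<longleftrightarrow> x \<in> metzler_spec m N Q \<and> x \<in> metzler_spec m' N R" for x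
  proof (cases "x \<in> tspace N")
    case True
    show ?thesis
      unfolding metzler_spec_def mem_Collect_eq diag off[OF True] using True by blast
  qed (simp add: metzler_spec_def)
  then show ?thesis
    by (simp add: set_eq_iff)
qed

definition permute_vars :: "(nat \<Rightarrow> nat) \<Rightarrow> smat_family \<Rightarrow> smat_family" where
  "permute_vars \<pi> Q k = Q (\<pi> k)"

lemma metzler_family_permute_vars:
  "metzler_family m N Q \<Longrightarrow> \<pi> ` {..N} \<subseteq> {..N} \<Longrightarrow> metzler_family m N (permute_vars \<pi> Q)"
  unfolding metzler_family_def permute_vars_def by auto

lemma metzler_spec_permute_vars:
  assumes fam: "metzler_family m N Q" and \<pi>: "\<pi> ` {..N} = {..N}"
    and x: "x \<in> tspace N" and y: "y \<in> tspace N" and xy: "\<forall>k\<le>N. xext y (\<pi> k) = xext x k"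
  shows "x \<in> metzler_spec m N (permute_vars \<pi> Q) \<longleftrightarrow> y \<in> metzler_spec m N Q"
proof (rule metzler_spec_shift[OF y x])
  fix i j P assume ij: "i < m" "j < m"
  have "entry_max N (permute_vars \<pi> Q) x i j P = 0 + entry_max N Q y i j P"
  proof (rule entry_max_reindex)
    show "\<forall>k\<le>N. \<exists>k'\<le>N. permute_vars \<pi> Q k' i j = Q k i j \<and> xext x k' = 0 + xext y k"
      using \<pi> xy by (force simp: permute_vars_def)
    show "\<forall>k'\<le>N. permute_vars \<pi> Q k' i j = szero \<or>
            (\<exists>k\<le>N. permute_vars \<pi> Q k' i j = Q k i j \<and> xext x k' = 0 + xext y k)"
      using \<pi> xy by (force simp: permute_vars_def)
  qed (use metzler_family_entry_not_PInf[OF fam _ ij] xext_not_PInf x y in auto)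
  then show "entry_max N (permute_vars \<pi> Q) x i j P = ereal 0 + entry_max N Q y i j P"
    by (simp add: zero_ereal_def)
qed

text \<open>The constant slot \<open>x\<^sub>0 = 0\<close> of \<open>Q\<close> becomes the first variable, and the variables of \<open>Q\<close>
  are moved up by one; variables beyond \<open>N + 1\<close> do not occur.\<close>
definition homog_family :: "nat \<Rightarrow> smat_family \<Rightarrow> smat_family" where
  "homog_family N Q k = (if 1 \<le> k \<and> k \<le> N + 1 then Q (k - 1) else (\<lambda>i j. szero))"

lemma metzler_family_homog_family:
  assumes "metzler_family m N Q"
  shows "metzler_family m N' (homog_family N Q)"
  unfolding metzler_family_def
proof (intro allI impI)
  fix k i j assume "k \<le> N'" "i < m" "j < m"
  then show "valid_strop (homog_family N Q k i j) \<and> homog_family N Q k i j = homog_family N Q k j i \<and>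
      (i \<noteq> j \<longrightarrow> fst (homog_family N Q k i j) \<le> 0)"
    using metzler_familyD[OF assms, of "k - 1" i j] metzler_familyD[OF assms, of "k - 1" j i]
    by (auto simp: homog_family_def)
qed

lemma tspace_Cons_append:
  "trop a \<Longrightarrow> x \<in> tspace N \<Longrightarrow> t \<in> tspace e \<Longrightarrow> a # map ((+) a) x @ t \<in> tspace (N + 1 + e)"
  unfolding tspace_def trop_def by (auto simp: ereal_add_not_PInf)

lemma metzler_spec_homog_family:
  assumes fam: "metzler_family m N Q" and x: "x \<in> tspace N" and t: "t \<in> tspace e"
  shows "ereal r # map ((+) (ereal r)) x @ t \<in> metzler_spec m (N + 1 + e) (homog_family N Q)
    \<longleftrightarrow> x \<in> metzler_spec m N Q"
proof -
  let ?x' = "ereal r # map ((+) (ereal r)) x @ t"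
  have x': "?x' \<in> tspace (N + 1 + e)"
    using tspace_Cons_append[OF _ x t, of "ereal r"] by (simp add: trop_def)
  have lx: "length x = N" using x by (simp add: tspace_def)
  have shifted: "xext ?x' (k + 1) = ereal r + xext x k" if "k \<le> N" for k
    using that lx by (cases k) (auto simp: xext_def nth_append)
  show ?thesis
  proof (rule metzler_spec_shift[OF x x'])
    fix i j P assume ij: "i < m" "j < m"
    show "entry_max (N + 1 + e) (homog_family N Q) ?x' i j P = ereal r + entry_max N Q x i j P"
    proof (rule entry_max_reindex)
      show "\<forall>k\<le>N. \<exists>k'\<le>N + 1 + e. homog_family N Q k' i j = Q k i j \<and> xext ?x' k' = ereal r + xext x k"
        using shifted by (auto simp: homog_family_def intro!: exI[of _ "_ + 1"])
      show "\<forall>k'\<le>N + 1 + e. homog_family N Q k' i j = szero \<or>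
              (\<exists>k\<le>N. homog_family N Q k' i j = Q k i j \<and> xext ?x' k' = ereal r + xext x k)"
      proof (intro allI impI)
        fix k' assume "k' \<le> N + 1 + e"
        show "homog_family N Q k' i j = szero \<or>
              (\<exists>k\<le>N. homog_family N Q k' i j = Q k i j \<and> xext ?x' k' = ereal r + xext x k)"
        proof (cases "1 \<le> k' \<and> k' \<le> N + 1")
          case True
          then have "k' - 1 \<le> N" by arith
          then show ?thesis
            using shifted[of "k' - 1"] True by (auto simp: homog_family_def)
        qed (auto simp: homog_family_def)
      qed
    qed (use metzler_family_entry_not_PInf[OF fam _ ij] xext_not_PInf x x' in auto)
  qed
qed

text \<open>Block \<open>c\<close> is the \<open>2 \<times> 2\<close> matrix with diagonal \<open>(x\<^bsub>\<alpha> c\<^esub>, x\<^bsub>\<beta> c\<^esub>)\<close> and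
  off-diagonal entry \<open>-x\<^bsub>\<gamma> c\<^esub>\<close>, occupying rows \<open>2 c\<close> and \<open>2 c + 1\<close>.\<close>
definition pair_blocks :: "(nat \<Rightarrow> nat) \<Rightarrow> (nat \<Rightarrow> nat) \<Rightarrow> (nat \<Rightarrow> nat) \<Rightarrow> smat_family" where
  "pair_blocks \<alpha> \<beta> \<gamma> k i j =
     (if i div 2 \<noteq> j div 2 then szero
      else if i \<noteq> j then (if k = \<gamma> (i div 2) then (-1, 0) else szero)
      else if k = (if even i then \<alpha> else \<beta>) (i div 2) then (1, 0) else szero)"

lemma metzler_family_pair_blocks: "metzler_family m N (pair_blocks \<alpha> \<beta> \<gamma>)"
  unfolding metzler_family_def pair_blocks_def by (auto simp: valid_strop_def szero_def)

lemma metzler_spec_pair_blocks: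
  assumes x: "x \<in> tspace N" and idx: "\<forall>c<n. \<alpha> c \<le> N \<and> \<beta> c \<le> N \<and> \<gamma> c \<le> N"
  shows "x \<in> metzler_spec (2 * n) N (pair_blocks \<alpha> \<beta> \<gamma>)
    \<longleftrightarrow> (\<forall>c<n. 2 * xext x (\<gamma> c) \<le> xext x (\<alpha> c) + xext x (\<beta> c))"
proof -
  let ?F = "pair_blocks \<alpha> \<beta> \<gamma>"
  have plus: "Qplus N ?F x i = xext x ((if even i then \<alpha> else \<beta>) (i div 2))" if "i < 2 * n" for i
    unfolding Qplus_eq_entry_max
    using entry_max_single[OF _ _ _ x, of "(if even i then \<alpha> else \<beta>) (i div 2)"] that idx
    by (simp add: pair_blocks_def)
  have minus: "Qminus N ?F x i = -\<infinity>" for i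
    unfolding Qminus_eq_entry_max by (rule entry_max_minf) (simp add: pair_blocks_def)
  have off_same: "Qoff N ?F x i j = xext x (\<gamma> (i div 2))"
    if "i < 2 * n" "i \<noteq> j" "i div 2 = j div 2" for i j
    unfolding Qoff_eq_entry_max
    using entry_max_single[OF _ _ _ x, of "\<gamma> (i div 2)"] that idx
    by (simp add: pair_blocks_def)
  have off_other: "Qoff N ?F x i j = -\<infinity>" if "i div 2 \<noteq> j div 2" for i j
    unfolding Qoff_eq_entry_max
    by (rule entry_max_minf) (use that x xext_not_PInf in \<open>auto simp: pair_blocks_def ereal_minf_add\<close>)
  have block: "2 * Qoff N ?F x (2 * c) (2 * c + 1) \<le> Qplus N ?F x (2 * c) + Qplus N ?F x (2 * c + 1)
      \<longleftrightarrow> 2 * xext x (\<gamma> c) \<le> xext x (\<alpha> c) + xext x (\<beta> c)" if "c < n" for c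
    using that off_same[of "2 * c" "2 * c + 1"] plus[of "2 * c"] plus[of "2 * c + 1"] by simp
  have "(\<forall>i<2 * n. \<forall>j<2 * n. i \<noteq> j \<longrightarrow> 2 * Qoff N ?F x i j \<le> Qplus N ?F x i + Qplus N ?F x j)
    \<longleftrightarrow> (\<forall>c<n. 2 * xext x (\<gamma> c) \<le> xext x (\<alpha> c) + xext x (\<beta> c))"
  proof
    assume "\<forall>i<2 * n. \<forall>j<2 * n. i \<noteq> j \<longrightarrow> 2 * Qoff N ?F x i j \<le> Qplus N ?F x i + Qplus N ?F x j"
    then show "\<forall>c<n. 2 * xext x (\<gamma> c) \<le> xext x (\<alpha> c) + xext x (\<beta> c)"
      using block by simp
  next
    assume blocks: "\<forall>c<n. 2 * xext x (\<gamma> c) \<le> xext x (\<alpha> c) + xext x (\<beta> c)"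
    show "\<forall>i<2 * n. \<forall>j<2 * n. i \<noteq> j \<longrightarrow> 2 * Qoff N ?F x i j \<le> Qplus N ?F x i + Qplus N ?F x j"
    proof (intro allI impI)
      fix i j assume ij: "i < 2 * n" "j < 2 * n" "i \<noteq> j"
      show "2 * Qoff N ?F x i j \<le> Qplus N ?F x i + Qplus N ?F x j"
      proof (cases "i div 2 = j div 2")
        case True
        define c where "c = i div 2"
        have c: "c < n" using ij(1) by (simp add: c_def)
        have "i = 2 * c \<and> j = 2 * c + 1 \<or> i = 2 * c + 1 \<and> j = 2 * c"
          using True ij(3) unfolding c_def by presburger
        moreover have "Qoff N ?F x (2 * c + 1) (2 * c) = Qoff N ?F x (2 * c) (2 * c + 1)"
          using off_same[of "2 * c" "2 * c + 1"] off_same[of "2 * c + 1" "2 * c"] c by simp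
        ultimately show ?thesis
          using block[OF c] blocks c by (auto simp: add.commute)
      qed (simp add: off_other)
    qed
  qed
  then show ?thesis
    unfolding metzler_spec_def using x minus by simp
qed

text \<open>Two diagonal \<open>1 \<times> 1\<close> conditions \<open>x\<^sub>l \<ge> 0\<close> and \<open>0 \<ge> x\<^sub>l\<close>.\<close>
definition fix_zero :: "nat \<Rightarrow> smat_family" where
  "fix_zero l k i j = (if i \<noteq> j then szero
     else if k = (if i = 0 then l else 0) then (1, 0)
     else if k = (if i = 0 then 0 else l) then (-1, 0) else szero)"

lemma metzler_family_fix_zero: "metzler_family m N (fix_zero l)"
  unfolding metzler_family_def fix_zero_def by (auto simp: valid_strop_def szero_def)

lemma metzler_spec_fix_zero:
  assumes x: "x \<in> tspace N" and l: "1 \<le> l" "l \<le> N"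
  shows "x \<in> metzler_spec 2 N (fix_zero l) \<longleftrightarrow> x ! (l - 1) = 0"
proof -
  have "Qplus N (fix_zero l) x 0 = x ! (l - 1)" "Qminus N (fix_zero l) x 1 = x ! (l - 1)"
    unfolding entry_max_simps
    by (subst entry_max_single[OF _ _ _ x, of l]; use l in \<open>simp add: fix_zero_def xext_def\<close>)+
  moreover have "Qminus N (fix_zero l) x 0 = 0" "Qplus N (fix_zero l) x 1 = 0"
    unfolding entry_max_simps
    by (subst entry_max_single[OF _ _ _ x, of 0]; use l in \<open>simp add: fix_zero_def xext_def\<close>)+
  moreover have "Qoff N (fix_zero l) x i j = -\<infinity>" if "i \<noteq> j" for i j
    unfolding Qoff_eq_entry_max
    by (rule entry_max_minf) (use that x xext_not_PInf in \<open>auto simp: fix_zero_def ereal_minf_add\<close>)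
  ultimately show ?thesis
    unfolding metzler_spec_def using x
    by (auto simp: less_2_cases_iff intro: antisym dest: spec[of _ 0] spec[of _ 1])
qed

lemma proj_metzler_spec_empty: "proj_metzler_spec d {}"
proof -
  define Q :: smat_family where "Q = (\<lambda>k i j. if k = 0 then (-1, 0) else szero)"
  have fam: "metzler_family 1 (d + 0) Q"
    unfolding metzler_family_def Q_def by (auto simp: valid_strop_def szero_def)
  have "x \<notin> metzler_spec 1 (d + 0) Q" for x
  proof
    assume x: "x \<in> metzler_spec 1 (d + 0) Q"
    then have "x \<in> tspace (d + 0)" and "Qminus (d + 0) Q x 0 \<le> Qplus (d + 0) Q x 0"
      unfolding metzler_spec_def by auto
    moreover have "Qplus (d + 0) Q x 0 = -\<infinity>"
      unfolding Qplus_eq_entry_max by (rule entry_max_minf) (simp add: Q_def)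
    moreover have "Qminus (d + 0) Q x 0 = 0"
      unfolding Qminus_eq_entry_max
      by (subst entry_max_single[OF _ _ _ \<open>x \<in> tspace (d + 0)\<close>, of 0]) (auto simp: Q_def xext_def)
    ultimately show False by simp
  qed
  then show ?thesis
    unfolding proj_metzler_spec_def using fam by blast
qed

subsection \<open>Homogenization\<close>

lemma homog_empty [simp]: "homog {} = {}"
  by (simp add: homog_def)

lemma Cons_zero_in_homog_iff: "0 # s \<in> homog S \<longleftrightarrow> s \<in> S"
proof -
  have "(+) (0 :: ereal) = id" by (rule ext) simp
  then show ?thesis
    unfolding homog_def trop_def by auto
qed

lemma tspace_take: "x \<in> tspace N \<Longrightarrow> n \<le> N \<Longrightarrow> take n x \<in> tspace n"
  unfolding tspace_def by (auto dest: in_set_takeD)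

lemma ereal_add_diff_cancel: "a \<noteq> \<infinity> \<Longrightarrow> ereal r + (a - ereal r) = a"
  by (cases a) auto

lemma tspace_homog_decomp:
  assumes x': "x' \<in> tspace (N + 1 + e)" and r: "x' ! 0 = ereal r"
  obtains x t where "x \<in> tspace N" "t \<in> tspace e" "x' = ereal r # map ((+) (ereal r)) x @ t"
proof
  let ?x = "map (\<lambda>a. a - ereal r) (take N (tl x'))"
  have lx: "length x' = N + 1 + e" and fx: "\<forall>a\<in>set x'. a \<noteq> \<infinity>"
    using x' by (auto simp: tspace_def trop_def)
  then obtain xs where xs: "x' = ereal r # xs"
    using r by (cases x') auto
  show "?x \<in> tspace N"
    using lx fx xs by (auto simp: tspace_def trop_def ereal_minus_eq_PInfty_iff dest: in_set_takeD)
  show "drop (N + 1) x' \<in> tspace e"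
    using lx fx by (auto simp: tspace_def trop_def dest: in_set_dropD)
  have "map ((+) (ereal r)) ?x = take N xs"
    by (rule nth_equalityI) (use fx xs in \<open>auto simp: ereal_add_diff_cancel\<close>)
  then show "x' = ereal r # map ((+) (ereal r)) ?x @ drop (N + 1) x'"
    using xs by simp
qed

text \<open>Variable \<open>1\<close> is the homogenizing coordinate \<open>x\<^sub>0\<close>, variable \<open>c + 2\<close> is \<open>x\<^sub>0 + x\<^sub>c\<close> and
  variable \<open>N + 2 + c\<close> is the fresh \<open>t\<^sub>c\<close>.\<close>
definition homog_lift :: "nat \<Rightarrow> nat \<Rightarrow> nat \<Rightarrow> smat_family \<Rightarrow> smat_family" where
  "homog_lift m N n Q =
     block_diag m (homog_family N Q) (pair_blocks (\<lambda>_. 1) (\<lambda>c. N + 2 + c) (\<lambda>c. c + 2))"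

lemma metzler_family_homog_lift:
  "metzler_family m N Q \<Longrightarrow> metzler_family (m + 2 * n) (N + 1 + n) (homog_lift m N n Q)"
  unfolding homog_lift_def
  by (intro metzler_family_block_diag metzler_family_homog_family metzler_family_pair_blocks)

lemma metzler_spec_homog_lift_pair_blocks:
  assumes "x' \<in> tspace (N + 1 + n)"
  shows "x' \<in> metzler_spec (m + 2 * n) (N + 1 + n) (homog_lift m N n Q) \<longleftrightarrow>
    x' \<in> metzler_spec m (N + 1 + n) (homog_family N Q) \<and>
    (\<forall>c<n. 2 * x' ! (c + 1) \<le> x' ! 0 + x' ! (N + 1 + c))"
proof -
  have "x' \<in> metzler_spec (2 * n) (N + 1 + n) (pair_blocks (\<lambda>_. 1) (\<lambda>c. N + 2 + c) (\<lambda>c. c + 2))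
      \<longleftrightarrow> (\<forall>c<n. 2 * xext x' (c + 2) \<le> xext x' 1 + xext x' (N + 2 + c))"
    by (rule metzler_spec_pair_blocks[OF assms, of n "\<lambda>_. 1" "\<lambda>c. N + 2 + c" "\<lambda>c. c + 2"]) simp
  also have "\<dots> \<longleftrightarrow> (\<forall>c<n. 2 * x' ! (c + 1) \<le> x' ! 0 + x' ! (N + 1 + c))"
    by (simp add: xext_def)
  finally have "x' \<in> metzler_spec (2 * n) (N + 1 + n) (pair_blocks (\<lambda>_. 1) (\<lambda>c. N + 2 + c) (\<lambda>c. c + 2))
      \<longleftrightarrow> (\<forall>c<n. 2 * x' ! (c + 1) \<le> x' ! 0 + x' ! (N + 1 + c))" .
  then show ?thesis
    unfolding homog_lift_def metzler_spec_block_diag by blast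
qed

lemma metzler_spec_homog_lift:
  assumes fam: "metzler_family m N Q" and "n \<le> N" and x: "x \<in> tspace N" and t: "t \<in> tspace n"
  shows "ereal r # map ((+) (ereal r)) x @ t \<in> metzler_spec (m + 2 * n) (N + 1 + n) (homog_lift m N n Q)
    \<longleftrightarrow> x \<in> metzler_spec m N Q \<and> (\<forall>c<n. 2 * (ereal r + x ! c) \<le> ereal r + t ! c)"
proof -
  have "length x = N" "length t = n"
    using x t by (auto simp: tspace_def)
  then show ?thesis
    using metzler_spec_homog_lift_pair_blocks[OF tspace_Cons_append[OF _ x t]]
      metzler_spec_homog_family[OF fam x t] \<open>n \<le> N\<close>
    by (simp add: trop_def nth_append)
qed

lemma metzler_spec_homog_lift_minf:
  assumes x': "x' \<in> metzler_spec (m + 2 * n) (N + 1 + n) (homog_lift m N n Q)"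
    and minf: "x' ! 0 = -\<infinity>" and "c < n"
  shows "x' ! (c + 1) = -\<infinity>"
proof -
  have t: "x' \<in> tspace (N + 1 + n)"
    using x' by (simp add: metzler_spec_def)
  then have "x' ! (N + 1 + c) \<noteq> \<infinity>"
    using \<open>c < n\<close> by (auto simp: tspace_def trop_def)
  moreover have "2 * x' ! (c + 1) \<le> x' ! 0 + x' ! (N + 1 + c)"
    using metzler_spec_homog_lift_pair_blocks[OF t] x' \<open>c < n\<close> by blast
  ultimately have "2 * x' ! (c + 1) \<le> -\<infinity>"
    using minf by (simp add: ereal_minf_add)
  then show ?thesis
    by (cases "x' ! (c + 1)") auto
qed

lemma replicate_minf_in_metzler_spec_homog_lift:
  "metzler_family m N Q \<Longrightarrow>
    replicate (N + 1 + n) (-\<infinity>) \<in> metzler_spec (m + 2 * n) (N + 1 + n) (homog_lift m N n Q)"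
  by (rule replicate_minf_in_metzler_spec[OF metzler_family_homog_lift])
    (auto simp: homog_lift_def block_diag_def homog_family_def pair_blocks_def split: if_splits)

lemma ereal_double_add: "2 * (ereal r + a) = ereal r + (ereal r + 2 * a)"
  by (cases a) auto

lemma homog_subset_homog_lift:
  assumes fam: "metzler_family m N Q" and "n \<le> N"
  shows "homog (take n ` metzler_spec m N Q)
    \<subseteq> take (n + 1) ` metzler_spec (m + 2 * n) (N + 1 + n) (homog_lift m N n Q)"
proof
  fix p assume "p \<in> homog (take n ` metzler_spec m N Q)"
  then obtain x0 x where p: "p = x0 # map ((+) x0) (take n x)" "trop x0" and x: "x \<in> metzler_spec m N Q"
    unfolding homog_def by auto
  have xt: "x \<in> tspace N"
    using x by (simp add: metzler_spec_def)
  show "p \<in> take (n + 1) ` metzler_spec (m + 2 * n) (N + 1 + n) (homog_lift m N n Q)"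
  proof (cases x0)
    case (real r)
    define t where "t = map (\<lambda>a. ereal r + 2 * a) (take n x)"
    have "t \<in> tspace n"
      using tspace_take[OF xt \<open>n \<le> N\<close>] by (auto simp: t_def tspace_def trop_def ereal_add_not_PInf)
    moreover have "\<forall>c<n. 2 * (ereal r + x ! c) \<le> ereal r + t ! c"
      using xt \<open>n \<le> N\<close> by (simp add: t_def tspace_def ereal_double_add[unfolded numeral_eq_ereal])
    ultimately have "ereal r # map ((+) (ereal r)) x @ t
        \<in> metzler_spec (m + 2 * n) (N + 1 + n) (homog_lift m N n Q)"
      using metzler_spec_homog_lift[OF fam \<open>n \<le> N\<close> xt] x by blast
    moreover have "take (n + 1) (ereal r # map ((+) (ereal r)) x @ t) = p"
      using p real xt \<open>n \<le> N\<close> by (simp add: tspace_def take_map)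
    ultimately show ?thesis
      by (metis image_eqI)
  next
    case MInf
    have "map ((+) x0) (take n x) = replicate n (-\<infinity>)"
      using xt \<open>n \<le> N\<close> MInf
      by (intro nth_equalityI) (auto simp: tspace_def trop_def ereal_minf_add)
    then have "take (n + 1) (replicate (N + 1 + n) (-\<infinity>)) = p"
      using p MInf \<open>n \<le> N\<close> by simp
    then show ?thesis
      using replicate_minf_in_metzler_spec_homog_lift[OF fam] by (metis image_eqI)
  qed (use p in \<open>simp add: trop_def\<close>)
qed

lemma homog_lift_subset_homog:
  assumes fam: "metzler_family m N Q" and "n \<le> N" and ne: "metzler_spec m N Q \<noteq> {}"
  shows "take (n + 1) ` metzler_spec (m + 2 * n) (N + 1 + n) (homog_lift m N n Q)
    \<subseteq> homog (take n ` metzler_spec m N Q)"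
proof
  fix p assume "p \<in> take (n + 1) ` metzler_spec (m + 2 * n) (N + 1 + n) (homog_lift m N n Q)"
  then obtain x' where x': "x' \<in> metzler_spec (m + 2 * n) (N + 1 + n) (homog_lift m N n Q)"
    and p: "p = take (n + 1) x'"
    by auto
  have x't: "x' \<in> tspace (N + 1 + n)"
    using x' by (simp add: metzler_spec_def)
  then have lx': "length x' = N + 1 + n" and fx': "\<forall>a\<in>set x'. a \<noteq> \<infinity>"
    by (auto simp: tspace_def trop_def)
  show "p \<in> homog (take n ` metzler_spec m N Q)"
  proof (cases "x' ! 0")
    case (real r)
    then obtain x t where x: "x \<in> tspace N" and t: "t \<in> tspace n"
      and dec: "x' = ereal r # map ((+) (ereal r)) x @ t"
      using tspace_homog_decomp[OF x't] by blast
    then have "x \<in> metzler_spec m N Q"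
      using metzler_spec_homog_lift[OF fam \<open>n \<le> N\<close> x t] x' by simp
    moreover have "p = ereal r # map ((+) (ereal r)) (take n x)"
      using p dec x \<open>n \<le> N\<close> by (simp add: tspace_def take_map)
    ultimately show ?thesis
      unfolding homog_def trop_def by auto
  next
    case MInf
    obtain x where x: "x \<in> metzler_spec m N Q"
      using ne by blast
    then have xt: "x \<in> tspace N"
      by (simp add: metzler_spec_def)
    have "p = replicate (n + 1) (-\<infinity>)"
    proof (rule nth_equalityI)
      fix k assume "k < length p"
      then show "p ! k = replicate (n + 1) (-\<infinity>) ! k"
        using p lx' MInf metzler_spec_homog_lift_minf[OF x' MInf, of "k - 1"] by (cases k) auto
    qed (use p lx' in simp)
    moreover have "map ((+) (-\<infinity>)) (take n x) = replicate n (-\<infinity>)"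
      using xt \<open>n \<le> N\<close> by (intro nth_equalityI) (auto simp: tspace_def trop_def ereal_minf_add)
    ultimately show ?thesis
      using x unfolding homog_def trop_def by force
  qed (use fx' lx' nth_mem[of 0 x'] in simp)
qed

lemma proj_metzler_spec_homog:
  assumes "proj_metzler_spec n S" and "S \<noteq> {}"
  shows "proj_metzler_spec (n + 1) (homog S)"
proof -
  obtain d' m Q where fam: "metzler_family m (n + d') Q" and S: "S = take n ` metzler_spec m (n + d') Q"
    using assms(1) unfolding proj_metzler_spec_def by blast
  have "homog S = take (n + 1) ` metzler_spec (m + 2 * n) (n + d' + 1 + n) (homog_lift m (n + d') n Q)"
    using homog_subset_homog_lift[OF fam le_add1] homog_lift_subset_homog[OF fam le_add1] S assms(2)
    by auto
  moreover have "n + d' + 1 + n = (n + 1) + (d' + n)"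
    by simp
  ultimately show ?thesis
    unfolding proj_metzler_spec_def using metzler_family_homog_lift[OF fam] by metis
qed

subsection \<open>Dehomogenization\<close>

text \<open>In \<open>dehomog_lift\<close> the variables of \<open>Q\<close> are read off \<open>last y # butlast y\<close>, so the
  homogenizing coordinate becomes the last variable, where \<open>fix_zero\<close> pins it to \<open>0\<close>.\<close>
definition rotate_var :: "nat \<Rightarrow> nat \<Rightarrow> nat" where
  "rotate_var N k = (if k = 0 then 0 else if k = N then 1 else k + 1)"

lemma rotate_var_image: "1 \<le> N \<Longrightarrow> rotate_var N ` {..N} = {..N}"
proof (intro equalityI subsetI)
  fix k assume N: "1 \<le> N" and "k \<in> {..N}"
  then consider "k = 0" | "k = 1" | "2 \<le> k" "k \<le> N" by force
  then show "k \<in> rotate_var N ` {..N}"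
  proof cases
    case 1
    then show ?thesis by (force simp: rotate_var_def)
  next
    case 2
    then have "k = rotate_var N N" using N by (simp add: rotate_var_def)
    then show ?thesis by simp
  next
    case 3
    then have "k = rotate_var N (k - 1)" by (simp add: rotate_var_def)
    then show ?thesis using 3 by simp
  qed
qed (auto simp: rotate_var_def)

lemma xext_rotate_var:
  assumes "length y = N" "1 \<le> N" "k \<le> N"
  shows "xext (last y # butlast y) (rotate_var N k) = xext y k"
proof -
  consider "k = 0" | "k = N" | "1 \<le> k" "k < N" using assms(3) by force
  then show ?thesis
  proof cases
    case 2
    have "y \<noteq> []" using assms by auto
    then show ?thesis using 2 assms by (simp add: rotate_var_def xext_def last_conv_nth)
  next
    case 3
    then show ?thesis using assms by (simp add: rotate_var_def xext_def nth_butlast)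
  qed (simp add: rotate_var_def xext_def)
qed

definition dehomog_lift :: "nat \<Rightarrow> nat \<Rightarrow> smat_family \<Rightarrow> smat_family" where
  "dehomog_lift m N Q = block_diag m (permute_vars (rotate_var N) Q) (fix_zero N)"

lemma metzler_family_dehomog_lift:
  "metzler_family m N Q \<Longrightarrow> 1 \<le> N \<Longrightarrow> metzler_family (m + 2) N (dehomog_lift m N Q)"
  unfolding dehomog_lift_def
  by (intro metzler_family_block_diag metzler_family_permute_vars metzler_family_fix_zero)
    (simp_all add: rotate_var_image)

lemma metzler_spec_dehomog_lift:
  assumes fam: "metzler_family m N Q" and N: "1 \<le> N" and y: "y \<in> tspace N"
  shows "y \<in> metzler_spec (m + 2) N (dehomog_lift m N Q) \<longleftrightarrow>
    last y # butlast y \<in> metzler_spec m N Q \<and> last y = 0"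
proof -
  have ly: "length y = N"
    using y by (simp add: tspace_def)
  have "last y # butlast y \<in> tspace N"
    using y N by (cases y rule: rev_cases) (auto simp: tspace_def)
  moreover have "\<forall>k\<le>N. xext (last y # butlast y) (rotate_var N k) = xext y k"
    using xext_rotate_var[OF ly N] by simp
  ultimately have perm: "y \<in> metzler_spec m N (permute_vars (rotate_var N) Q) \<longleftrightarrow>
      last y # butlast y \<in> metzler_spec m N Q"
    by (rule metzler_spec_permute_vars[OF fam rotate_var_image[OF N] y])
  have zero: "y \<in> metzler_spec 2 N (fix_zero N) \<longleftrightarrow> last y = 0"
    using metzler_spec_fix_zero[OF y N order_refl] ly N last_conv_nth[of y] by fastforce
  show ?thesis
    unfolding dehomog_lift_def metzler_spec_block_diag Int_iff perm zero ..
qed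

lemma proj_metzler_spec_dehomog:
  assumes "proj_metzler_spec (n + 1) (homog S)"
  shows "proj_metzler_spec n S"
proof -
  obtain d' m Q where fam: "metzler_family m (n + 1 + d') Q"
    and H: "homog S = take (n + 1) ` metzler_spec m (n + 1 + d') Q"
    using assms unfolding proj_metzler_spec_def by blast
  define N where "N = n + 1 + d'"
  have N: "1 \<le> N" "n < N"
    by (simp_all add: N_def)
  have "S = take n ` metzler_spec (m + 2) N (dehomog_lift m N Q)"
  proof (intro equalityI subsetI)
    fix s assume "s \<in> S"
    then obtain u where u: "u \<in> metzler_spec m N Q" "take (n + 1) u = 0 # s"
      using H Cons_zero_in_homog_iff unfolding N_def by (metis imageE)
    have ut: "u \<in> tspace N"
      using u(1) by (simp add: metzler_spec_def)
    then obtain u0 us where u0: "u = u0 # us"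
      using N by (cases u) (auto simp: tspace_def)
    define y where "y = us @ [u0]"
    have "y \<in> tspace N"
      using ut u0 by (auto simp: y_def tspace_def)
    moreover have "u0 = 0" "take n us = s"
      using u(2) u0 by simp_all
    ultimately have "y \<in> metzler_spec (m + 2) N (dehomog_lift m N Q)" "take n y = s"
      using metzler_spec_dehomog_lift[OF fam[folded N_def] N(1)] u(1) u0 ut N(2)
      by (auto simp: y_def tspace_def)
    then show "s \<in> take n ` metzler_spec (m + 2) N (dehomog_lift m N Q)"
      by (metis imageI)
  next
    fix s assume "s \<in> take n ` metzler_spec (m + 2) N (dehomog_lift m N Q)"
    then obtain y where y: "y \<in> metzler_spec (m + 2) N (dehomog_lift m N Q)" "s = take n y"
      by blast
    have yt: "y \<in> tspace N"
      using y(1) by (simp add: metzler_spec_def)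
    then have "last y # butlast y \<in> metzler_spec m N Q" "last y = 0"
      using metzler_spec_dehomog_lift[OF fam[folded N_def] N(1) yt] y(1) by blast+
    moreover have "take (n + 1) (last y # butlast y) = 0 # s"
      using yt y(2) N(2) \<open>last y = 0\<close> by (simp add: tspace_def take_butlast)
    ultimately show "s \<in> S"
      using H Cons_zero_in_homog_iff unfolding N_def by (metis imageI)
  qed
  moreover have "N = n + (d' + 1)"
    by (simp add: N_def)
  ultimately show ?thesis
    unfolding proj_metzler_spec_def using metzler_family_dehomog_lift[OF fam[folded N_def] N(1)] by blast
qed

theorem mainTheorem16:
  fixes S :: "ereal list set" and n :: nat
  assumes "S \<subseteq> tspace n" and "trop_convex S"
  shows "proj_metzler_spec n S \<longleftrightarrow> proj_metzler_spec (n + 1) (homog S)"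
proof
  assume S: "proj_metzler_spec n S"
  show "proj_metzler_spec (n + 1) (homog S)"
  proof (cases "S = {}")
    case True
    then show ?thesis by (simp add: proj_metzler_spec_empty)
  next
    case False
    with S show ?thesis by (rule proj_metzler_spec_homog)
  qed
next
  assume "proj_metzler_spec (n + 1) (homog S)"
  then show "proj_metzler_spec n S" by (rule proj_metzler_spec_dehomog)
qed

end
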